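(* Let $\mathcal{B}(\Omega)$ be a strong Bergman-type space. Then $k_0\equiv 1$ on $\Omega$, and for every measurable $u:\Omega\to\mathbb{C}$ such that $u\circ\varphi_z\in L^2(\Omega;d\sigma)$ for all $z\in\Omega$, one has for all $z,w\in\Omega$ $$|U_zT_uk_z(w)|=|P(u\circ\varphi_z)(w)|.$$
   Context: Notation: $A\lesssim B$ means $A\le CB$ for a constant $C$ independent of the relevant variables; $A\simeq B$ means $A\lesssim B$ and $B\lesssim A$. Bergman-type space: $\Omega\subset\mathbb{C}^n$ is a domain containing $0$ such that: (A.1) for each $z\in\Omega$ there is an involutive biholomorphic automorphism $\varphi_z$ of $\Omega$ with $\varphi_z(0)=z$; (A.2) there is a metric $d$ on $\Omega$ with $d(u,v)\simeq d(\varphi_z(u),\varphi_z(v))$ uniformly in $u,v,z$; $(\Omega,d)$ is separable and every closed $d$-ball is compact; $D(z,r)$ denotes the $d$-ball of center $z$ and radius $r$; (A.3) $\sigma$ is a finite Borel measure on $\Omega$, $\mathcal{B}(\Omega)$ is the space of holomorphic functions on $\Omega$ lying in $L^2(\Omega;d\sigma)$ with the $L^2(\sigma)$ norm $\|\cdot\|$ and inner product $\langle\cdot,\cdot\rangle$; $\mathcal{B}(\Omega)$ is a reproducing kernel Hilbert space with reproducing kernel $K_z$ ($f(z)=\langle f,K_z\rangle$) and normalized kernel $k_z=K_z/\|K_z\|$; $z\mapsto\|K_z\|$ is continuous on $(\Omega,d)$; (A.4) the measure $d\lambda(z):=\|K_z\|^2d\sigma(z)$ satisfies $\lambda(E)\simeq\lambda(\varphi_z(E))$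 for Borel $E$, uniformly in $z$, and is doubling: $\lambda(D(z,2r))\le C\lambda(D(z,r))$ for all $z,r>0$; (A.5) $|\langle k_z,k_w\rangle|\simeq 1/\|K_{\varphi_z(w)}\|$ uniformly in $z,w$; (A.6) (Rudin–Forelli estimates) there is a constant $\kappa\in[0,2)$ such that, if $\kappa>0$, for all $r>\kappa>s>0$ one has $\sup_{z\in\Omega}\int_\Omega \frac{|\langle K_z,K_w\rangle|^{(r+s)/2}}{\|K_z\|^s\|K_w\|^r}d\lambda(w)<\infty$, and if $\kappa=0$ this holds for all $r=s>0$; (A.7) $\|K_z\|\to\infty$ as $d(z,0)\to\infty$. A strong Bergman-type space is one in which $\simeq$ can be replaced by $=$ in (A.2), (A.4), (A.5), i.e. $d(u,v)=d(\varphi_z(u),\varphi_z(v))$, $\lambda(E)=\lambda(\varphi_z(E))$, $|\langle k_z,k_w\rangle|=1/\|K_{\varphi_z(w)}\|$. $P$ is the orthogonal projection of $L^2(\Omega;d\sigma)$ onto $\mathcal{B}(\Omega)$, $Pf(z)=\int_\Omega\langle K_w,K_z\rangle f(w)d\sigma(w)$; $T_u:=PM_u$, where $M_uf=uf$; $U_zf(w):=f(\varphi_z(w))k_z(w)$. *)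

theory Defs
  imports "HOL-Analysis.Analysis"
begin

text \<open>Points of C^n are modelled as complex ^ 'n (n = CARD('n)).\<close>

definition holo_fun :: "(complex ^ 'n \<Rightarrow> complex) \<Rightarrow> (complex ^ 'n) set \<Rightarrow> bool" where
  "holo_fun f S \<longleftrightarrow> (\<forall>z\<in>S. \<exists>L. (f has_derivative L) (at z) \<and> (\<forall>x. L (\<i> *s x) = \<i> * L x))"

definition holo_map :: "(complex ^ 'n \<Rightarrow> complex ^ 'm) \<Rightarrow> (complex ^ 'n) set \<Rightarrow> bool" where
  "holo_map F S \<longleftrightarrow> (\<forall>i. holo_fun (\<lambda>x. F x $ i) S)"

definition L2 :: "'a measure \<Rightarrow> ('a \<Rightarrow> complex) \<Rightarrow> bool" where
  "L2 M f \<longleftrightarrow> f \<in> borel_measurable M \<and> integrable M (\<lambda>x. (cmod (f x))\<^sup>2)"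

definition L2_norm :: "'a measure \<Rightarrow> ('a \<Rightarrow> complex) \<Rightarrow> real" where
  "L2_norm M f = sqrt (\<integral>x. (cmod (f x))\<^sup>2 \<partial>M)"

definition L2_inner :: "'a measure \<Rightarrow> ('a \<Rightarrow> complex) \<Rightarrow> ('a \<Rightarrow> complex) \<Rightarrow> complex" where
  "L2_inner M f g = (\<integral>x. f x * cnj (g x) \<partial>M)"

definition bergman_space :: "(complex ^ 'n) set \<Rightarrow> (complex ^ 'n) measure \<Rightarrow> (complex ^ 'n \<Rightarrow> complex) set" where
  "bergman_space \<Omega> \<sigma> = {f. holo_fun f \<Omega> \<and> L2 \<sigma> f}"

definition Knorm :: "(complex ^ 'n) measure \<Rightarrow> (complex ^ 'n \<Rightarrow> complex ^ 'n \<Rightarrow> complex) \<Rightarrow> complex ^ 'n \<Rightarrow> real" where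
  "Knorm \<sigma> K z = L2_norm \<sigma> (K z)"

definition kn :: "(complex ^ 'n) measure \<Rightarrow> (complex ^ 'n \<Rightarrow> complex ^ 'n \<Rightarrow> complex) \<Rightarrow> complex ^ 'n \<Rightarrow> complex ^ 'n \<Rightarrow> complex" where
  "kn \<sigma> K z w = K z w / complex_of_real (Knorm \<sigma> K z)"

definition blambda :: "(complex ^ 'n) measure \<Rightarrow> (complex ^ 'n \<Rightarrow> complex ^ 'n \<Rightarrow> complex) \<Rightarrow> (complex ^ 'n) measure" where
  "blambda \<sigma> K = density \<sigma> (\<lambda>z. ennreal ((Knorm \<sigma> K z)\<^sup>2))"

definition Pop :: "(complex ^ 'n) measure \<Rightarrow> (complex ^ 'n \<Rightarrow> complex ^ 'n \<Rightarrow> complex) \<Rightarrow> (complex ^ 'n \<Rightarrow> complex) \<Rightarrow> complex ^ 'n \<Rightarrow> complex" where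
  "Pop \<sigma> K f z = (\<integral>w. L2_inner \<sigma> (K w) (K z) * f w \<partial>\<sigma>)"

definition Top :: "(complex ^ 'n) measure \<Rightarrow> (complex ^ 'n \<Rightarrow> complex ^ 'n \<Rightarrow> complex) \<Rightarrow> (complex ^ 'n \<Rightarrow> complex) \<Rightarrow> (complex ^ 'n \<Rightarrow> complex) \<Rightarrow> complex ^ 'n \<Rightarrow> complex" where
  "Top \<sigma> K u f = Pop \<sigma> K (\<lambda>w. u w * f w)"

definition Uop :: "(complex ^ 'n) measure \<Rightarrow> (complex ^ 'n \<Rightarrow> complex ^ 'n \<Rightarrow> complex) \<Rightarrow> (complex ^ 'n \<Rightarrow> complex ^ 'n \<Rightarrow> complex ^ 'n) \<Rightarrow> complex ^ 'n \<Rightarrow> (complex ^ 'n \<Rightarrow> complex) \<Rightarrow> complex ^ 'n \<Rightarrow> complex" where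
  "Uop \<sigma> K \<phi> z f w = f (\<phi> z w) * kn \<sigma> K z w"

definition RF_bound :: "(complex ^ 'n) set \<Rightarrow> (complex ^ 'n) measure \<Rightarrow> (complex ^ 'n \<Rightarrow> complex ^ 'n \<Rightarrow> complex) \<Rightarrow> real \<Rightarrow> real \<Rightarrow> bool" where
  "RF_bound \<Omega> \<sigma> K r s \<longleftrightarrow> (\<exists>M::real. \<forall>z\<in>\<Omega>.
     (\<integral>\<^sup>+ w. ennreal (cmod (L2_inner \<sigma> (K z) (K w)) powr ((r + s) / 2)
        / (Knorm \<sigma> K z powr s * Knorm \<sigma> K w powr r)) \<partial>(blambda \<sigma> K)) \<le> ennreal M)"

text \<open>Strong Bergman-type space: (A.1)--(A.7) with equalities in (A.2), (A.4), (A.5).\<close>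
definition strong_bergman_type ::
  "(complex ^ 'n) set \<Rightarrow> (complex ^ 'n) measure \<Rightarrow> (complex ^ 'n \<Rightarrow> complex ^ 'n \<Rightarrow> real)
   \<Rightarrow> (complex ^ 'n \<Rightarrow> complex ^ 'n \<Rightarrow> complex ^ 'n) \<Rightarrow> (complex ^ 'n \<Rightarrow> complex ^ 'n \<Rightarrow> complex) \<Rightarrow> bool" where
  "strong_bergman_type \<Omega> \<sigma> d \<phi> K \<longleftrightarrow>
    \<comment> \<open>domain containing 0\<close>
    open \<Omega> \<and> connected \<Omega> \<and> 0 \<in> \<Omega> \<and>
    \<comment> \<open>(A.1) involutive biholomorphic automorphisms\<close>
    (\<forall>z\<in>\<Omega>. \<phi> z ` \<Omega> \<subseteq> \<Omega> \<and> holo_map (\<phi> z) \<Omega> \<and> (\<forall>x\<in>\<Omega>. \<phi> z (\<phi> z x) = x) \<and> \<phi> z 0 = z) \<and>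
    \<comment> \<open>(A.2) metric, invariant, separable, closed balls compact\<close>
    Metric_space \<Omega> d \<and>
    (\<forall>z\<in>\<Omega>. \<forall>u\<in>\<Omega>. \<forall>v\<in>\<Omega>. d (\<phi> z u) (\<phi> z v) = d u v) \<and>
    separable_space (Metric_space.mtopology \<Omega> d) \<and>
    (\<forall>z\<in>\<Omega>. \<forall>r. compactin (Metric_space.mtopology \<Omega> d) (Metric_space.mcball \<Omega> d z r)) \<and>
    \<comment> \<open>(A.3) finite Borel measure on Omega, reproducing kernel Hilbert space\<close>
    sets \<sigma> = sets (restrict_space borel \<Omega>) \<and> finite_measure \<sigma> \<and>
    (\<forall>F. (\<forall>n. F n \<in> bergman_space \<Omega> \<sigma>) \<and>
         (\<forall>e>0. \<exists>N. \<forall>m\<ge>N. \<forall>n\<ge>N. L2_norm \<sigma> (\<lambda>x. F m x - F n x) < e) \<longrightarrow>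
         (\<exists>f\<in>bergman_space \<Omega> \<sigma>. (\<lambda>n. L2_norm \<sigma> (\<lambda>x. F n x - f x)) \<longlonglongrightarrow> 0)) \<and>
    (\<forall>z\<in>\<Omega>. K z \<in> bergman_space \<Omega> \<sigma>) \<and>
    (\<forall>f\<in>bergman_space \<Omega> \<sigma>. \<forall>z\<in>\<Omega>. f z = L2_inner \<sigma> f (K z)) \<and>
    continuous_map (Metric_space.mtopology \<Omega> d) euclideanreal (Knorm \<sigma> K) \<and>
    \<comment> \<open>(A.4) invariance and doubling of lambda\<close>
    (\<forall>z\<in>\<Omega>. \<forall>E\<in>sets \<sigma>. emeasure (blambda \<sigma> K) (\<phi> z ` E) = emeasure (blambda \<sigma> K) E) \<and>
    (\<exists>C::real. \<forall>z\<in>\<Omega>. \<forall>r>0.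
        emeasure (blambda \<sigma> K) (Metric_space.mball \<Omega> d z (2 * r))
          \<le> ennreal C * emeasure (blambda \<sigma> K) (Metric_space.mball \<Omega> d z r)) \<and>
    \<comment> \<open>(A.5)\<close>
    (\<forall>z\<in>\<Omega>. \<forall>w\<in>\<Omega>. cmod (L2_inner \<sigma> (kn \<sigma> K z) (kn \<sigma> K w)) = 1 / Knorm \<sigma> K (\<phi> z w)) \<and>
    \<comment> \<open>(A.6) Rudin--Forelli estimates\<close>
    (\<exists>\<kappa>::real. 0 \<le> \<kappa> \<and> \<kappa> < 2 \<and>
       (\<kappa> > 0 \<longrightarrow> (\<forall>r s. r > \<kappa> \<and> \<kappa> > s \<and> s > 0 \<longrightarrow> RF_bound \<Omega> \<sigma> K r s)) \<and>
       (\<kappa> = 0 \<longrightarrow> (\<forall>r>0. RF_bound \<Omega> \<sigma> K r r))) \<and>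
    \<comment> \<open>(A.7)\<close>
    (\<forall>M::real. \<exists>R::real. \<forall>z\<in>\<Omega>. d z 0 > R \<longrightarrow> Knorm \<sigma> K z > M)"

end

theory Submission
  imports Defs
begin

(*
  By the invariance of the measure \<lambda> = \<parallel>K_v\<parallel>\<^sup>2 d\<sigma>(v) under \<phi>_z, integrals transform as
  \<integral> F d\<sigma> = \<integral> |k_z|\<^sup>2 (F \<circ> \<phi>_z) d\<sigma>. The normalization k_0 = 1 follows because 1 and K_0 both have
  norm one in L\<^sup>2(\<sigma>) and \<langle>1, K_0\<rangle> = 1. The holomorphic function v \<mapsto> k_z(\<phi>_z v) k_z(v) is unimodular
  by (A.5), hence constant, and equals k_z(0) k_z(z) = 1 at v = z. Therefore U_z is an isometric
  involution of B(\<Omega>), and comparing inner products gives the transformation rule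
  K_w(v) = K_{\<phi>_z w}(\<phi>_z v) k_z(v) conj(k_z(w)), which makes U_z commute with P. Since
  U_z(u k_z) = u \<circ> \<phi>_z, we get U_z T_u k_z = P(u \<circ> \<phi>_z) exactly, for every measurable u.
*)

section \<open>Holomorphic functions of several variables\<close>

lemma has_derivative_vec:
  fixes F :: "'a::euclidean_space \<Rightarrow> 'b::real_normed_vector ^ 'n"
  assumes "\<And>i. ((\<lambda>x. F x $ i) has_derivative L i) (at a)"
  shows "(F has_derivative (\<lambda>h. \<chi> i. L i h)) (at a)"
proof -
  have bl: "bounded_linear (L i)" for i using assms has_derivative_bounded_linear by blast
  have "linear (\<lambda>h. \<chi> i. L i h)"
    by (rule linearI) (simp_all add: vec_eq_iff linear_simps(1,5)[OF bl])
  hence "bounded_linear (\<lambda>h. \<chi> i. L i h)" by (simp add: linear_conv_bounded_linear)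
  moreover have "((\<lambda>y. \<chi> i. (1 / norm (y - a)) *\<^sub>R (F y $ i - (F a $ i + L i (y - a)))) \<longlongrightarrow> (\<chi> i. 0)) (at a)"
    by (rule tendsto_vec_lambda) (use assms in \<open>simp add: has_derivative_within[of _ _ _ UNIV]\<close>)
  moreover have "(\<lambda>y. \<chi> i. (1 / norm (y - a)) *\<^sub>R (F y $ i - (F a $ i + L i (y - a))))
      = (\<lambda>y. (1 / norm (y - a)) *\<^sub>R (F y - (F a + (\<chi> i. L i (y - a)))))"
    by (auto simp: vec_eq_iff)
  moreover have "(\<chi> i. 0) = (0 :: 'b ^ 'n)" by (simp add: vec_eq_iff)
  ultimately show ?thesis by (simp add: has_derivative_within[of _ _ _ UNIV])
qed

lemma holo_fun_const: "holo_fun (\<lambda>_. c) S"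
  unfolding holo_fun_def by (intro ballI exI[of _ "\<lambda>_. 0"]) auto

lemma holo_fun_mult:
  assumes "holo_fun f S" "holo_fun g S"
  shows "holo_fun (\<lambda>x. f x * g x) S"
  unfolding holo_fun_def
proof
  fix z assume "z \<in> S"
  then obtain F G where F: "(f has_derivative F) (at z)" "\<forall>x. F (\<i> *s x) = \<i> * F x"
    and G: "(g has_derivative G) (at z)" "\<forall>x. G (\<i> *s x) = \<i> * G x"
    using assms unfolding holo_fun_def by meson
  show "\<exists>L. ((\<lambda>x. f x * g x) has_derivative L) (at z) \<and> (\<forall>x. L (\<i> *s x) = \<i> * L x)"
    by (intro exI[of _ "\<lambda>h. f z * G h + F h * g z"] conjI has_derivative_mult F G)
       (simp add: F G algebra_simps)
qed

lemma holo_fun_compose: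
  fixes F :: "complex ^ 'n \<Rightarrow> complex ^ 'm"
  assumes f: "holo_fun f T" and F: "holo_map F S" and "F ` S \<subseteq> T"
  shows "holo_fun (\<lambda>x. f (F x)) S"
  unfolding holo_fun_def
proof
  fix z assume z: "z \<in> S"
  have "\<forall>i. \<exists>L. ((\<lambda>x. F x $ i) has_derivative L) (at z) \<and> (\<forall>x. L (\<i> *s x) = \<i> * L x)"
    using F z unfolding holo_map_def holo_fun_def by blast
  then obtain L where L: "\<And>i. ((\<lambda>x. F x $ i) has_derivative L i) (at z)" "\<And>i x. L i (\<i> *s x) = \<i> * L i x"
    by metis
  obtain G where G: "(f has_derivative G) (at (F z))" "\<forall>x. G (\<i> *s x) = \<i> * G x"
    using f assms(3) z unfolding holo_fun_def by blast
  have "(\<chi> i. L i (\<i> *s x)) = \<i> *s (\<chi> i. L i x)" for x by (simp add: vec_eq_iff L(2))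
  moreover have dF: "(F has_derivative (\<lambda>h. \<chi> i. L i h)) (at z)"
    by (rule has_derivative_vec) (rule L(1))
  ultimately show "\<exists>L. ((\<lambda>x. f (F x)) has_derivative L) (at z) \<and> (\<forall>x. L (\<i> *s x) = \<i> * L x)"
    by (intro exI[of _ "\<lambda>x. G (\<chi> i. L i x)"] conjI has_derivative_compose[OF dF G(1)])
       (simp add: G(2))
qed

lemma holo_fun_continuous_on: "holo_fun f S \<Longrightarrow> continuous_on S f"
  unfolding holo_fun_def by (meson continuous_at_imp_continuous_on has_derivative_continuous)

lemma holo_map_continuous_on:
  assumes "holo_map F S"
  shows "continuous_on S F"
proof -
  have "continuous_on S (\<lambda>x. \<chi> i. F x $ i)"
    using assms by (intro continuous_on_vec_lambda holo_fun_continuous_on) (simp add: holo_map_def)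
  thus ?thesis by simp
qed

text \<open>A holomorphic function of constant modulus has vanishing derivative: differentiating
  \<open>h \<cdot> cnj h = 1\<close> gives \<open>Re (cnj (h v) \<cdot> L y) = 0\<close> for all \<open>y\<close>, and complex linearity of \<open>L\<close>
  applied to \<open>\<i> y\<close> kills the imaginary part as well.\<close>
lemma holo_fun_unimodular_imp_constant:
  fixes h :: "complex ^ 'n \<Rightarrow> complex"
  assumes "open S" "connected S" and h: "holo_fun h S" and unimodular: "\<And>v. v \<in> S \<Longrightarrow> cmod (h v) = 1"
  shows "h constant_on S"
proof (rule has_derivative_zero_connected_constant_on[OF assms(2,1) finite.emptyI])
  show "continuous_on S h" using h by (rule holo_fun_continuous_on)
  show "\<forall>x\<in>S - {}. (h has_derivative (\<lambda>_. 0)) (at x within S)"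
  proof
    fix v assume "v \<in> S - {}"
    hence v: "v \<in> S" by simp
    obtain L where L: "(h has_derivative L) (at v)" "\<forall>x. L (\<i> *s x) = \<i> * L x"
      using h v unfolding holo_fun_def by blast
    have "((\<lambda>x. h x * cnj (h x)) has_derivative (\<lambda>y. h v * cnj (L y) + L y * cnj (h v))) (at v)"
      by (rule has_derivative_mult[OF L(1) has_derivative_cnj[OF L(1)]])
    moreover have "((\<lambda>x. h x * cnj (h x)) has_derivative (\<lambda>_. 0)) (at v)"
    proof (rule has_derivative_transform_within_open[OF has_derivative_const[of 1] assms(1) v])
      fix x assume "x \<in> S"
      thus "1 = h x * cnj (h x)" using unimodular complex_norm_square[of "h x"] by simp
    qed
    ultimately have Q: "h v * cnj (L y) + L y * cnj (h v) = 0" for y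
      by (metis has_derivative_unique)
    have "L y = 0" for y
    proof -
      define p where "p = L y * cnj (h v)"
      have "cnj p + p = 0" using Q[of y] unfolding p_def by (simp add: mult.commute)
      moreover have "\<i> * (p - cnj p) = 0"
        using Q[of "\<i> *s y"] L(2) unfolding p_def by (simp add: algebra_simps)
      ultimately have "p = 0" by (simp add: complex_eq_iff)
      thus ?thesis unfolding p_def using unimodular[OF v] by auto
    qed
    thus "(h has_derivative (\<lambda>_. 0)) (at v within S)"
      using L(1) has_derivative_at_withinI by (metis ext)
  qed
qed

section \<open>Square-integrable functions\<close>

lemma borel_measurable_cnj[measurable]:
  fixes f :: "'a \<Rightarrow> complex"
  assumes "f \<in> borel_measurable M"
  shows "(\<lambda>x. cnj (f x)) \<in> borel_measurable M"
  using measurable_compose[OF assms borel_measurable_continuous_onI[OF continuous_on_cnj[OF continuous_on_id]]]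
  by simp

lemma L2_integrable_mult_cnj:
  assumes "L2 M f" "L2 M g"
  shows "integrable M (\<lambda>x. f x * cnj (g x))"
proof (rule Bochner_Integration.integrable_bound)
  show "integrable M (\<lambda>x. (cmod (f x))\<^sup>2 + (cmod (g x))\<^sup>2)"
    using assms by (intro Bochner_Integration.integrable_add) (simp_all add: L2_def)
  have [measurable]: "f \<in> borel_measurable M" "g \<in> borel_measurable M"
    using assms by (simp_all add: L2_def)
  show "(\<lambda>x. f x * cnj (g x)) \<in> borel_measurable M" by measurable
  have "cmod a * cmod b \<le> (cmod a)\<^sup>2 + (cmod b)\<^sup>2" for a b
    using sum_squares_bound[of "cmod a" "cmod b"] mult_nonneg_nonneg[OF norm_ge_zero norm_ge_zero, of a b]
    by linarith
  thus "AE x in M. norm (f x * cnj (g x)) \<le> norm ((cmod (f x))\<^sup>2 + (cmod (g x))\<^sup>2)"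
    by (simp add: norm_mult)
qed

lemma L2_inner_commute: "L2_inner M f g = cnj (L2_inner M g f)"
proof -
  have "cnj (\<integral>x. g x * cnj (f x) \<partial>M) = (\<integral>x. cnj (g x * cnj (f x)) \<partial>M)"
    by (rule Bochner_Integration.integral_cnj[symmetric])
  thus ?thesis unfolding L2_inner_def by (simp add: mult.commute)
qed

lemma L2_inner_cong:
  assumes "\<And>x. x \<in> space M \<Longrightarrow> f x = f' x" "\<And>x. x \<in> space M \<Longrightarrow> g x = g' x"
  shows "L2_inner M f g = L2_inner M f' g'"
  unfolding L2_inner_def using assms by (intro Bochner_Integration.integral_cong) simp_all

lemma L2_inner_scale_right: "L2_inner M f (\<lambda>x. c * g x) = cnj c * L2_inner M f g"
  unfolding L2_inner_def by (simp add: ac_simps)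

lemma L2_inner_self: "L2_inner M f f = of_real (\<integral>x. (cmod (f x))\<^sup>2 \<partial>M)"
  unfolding L2_inner_def by (simp flip: complex_norm_square integral_complex_of_real)

lemma cmod_diff_power2: "(cmod (a - b))\<^sup>2 = (cmod a)\<^sup>2 - 2 * Re (a * cnj b) + (cmod b)\<^sup>2"
  unfolding cmod_power2 by (simp add: power2_eq_square algebra_simps)

lemma L2_diff:
  assumes f: "L2 M f" and g: "L2 M g"
  shows "L2 M (\<lambda>x. f x - g x)"
proof -
  have "integrable M (\<lambda>x. (cmod (f x))\<^sup>2 - 2 * Re (f x * cnj (g x)) + (cmod (g x))\<^sup>2)"
    using f g integrable_Re[OF L2_integrable_mult_cnj[OF f g]]
    by (intro Bochner_Integration.integrable_add Bochner_Integration.integrable_diff integrable_mult_right)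
       (simp_all add: L2_def)
  moreover have "(\<lambda>x. f x - g x) \<in> borel_measurable M"
    using f g unfolding L2_def by (intro borel_measurable_diff) simp_all
  ultimately show ?thesis by (simp add: L2_def cmod_diff_power2)
qed

lemma L2_norm_diff_sq:
  assumes f: "L2 M f" and g: "L2 M g"
  shows "(\<integral>x. (cmod (f x - g x))\<^sup>2 \<partial>M)
    = (\<integral>x. (cmod (f x))\<^sup>2 \<partial>M) - 2 * Re (L2_inner M f g) + (\<integral>x. (cmod (g x))\<^sup>2 \<partial>M)"
proof -
  define r where "r x = Re (f x * cnj (g x))" for x
  have r_int: "integrable M r"
    unfolding r_def by (rule integrable_Re[OF L2_integrable_mult_cnj[OF f g]])
  have "(\<integral>x. (cmod (f x - g x))\<^sup>2 \<partial>M)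
      = (\<integral>x. (cmod (f x))\<^sup>2 - 2 * r x + (cmod (g x))\<^sup>2 \<partial>M)"
    by (simp only: r_def cmod_diff_power2)
  also have "\<dots> = (\<integral>x. (cmod (f x))\<^sup>2 \<partial>M) - 2 * (\<integral>x. r x \<partial>M) + (\<integral>x. (cmod (g x))\<^sup>2 \<partial>M)"
    using f g r_int by (simp add: L2_def)
  also have "(\<integral>x. r x \<partial>M) = Re (L2_inner M f g)"
    unfolding r_def L2_inner_def by (rule integral_Re[OF L2_integrable_mult_cnj[OF f g]])
  finally show ?thesis .
qed

lemma bergman_space_cmult:
  assumes "f \<in> bergman_space \<Omega> \<sigma>"
  shows "(\<lambda>x. c * f x) \<in> bergman_space \<Omega> \<sigma>"
  using assms holo_fun_mult[OF holo_fun_const]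
  by (auto simp: bergman_space_def L2_def norm_mult power_mult_distrib)

lemma borel_measurable_diagonal:
  fixes G :: "'a::{metric_space, second_countable_topology} \<Rightarrow> 'a \<Rightarrow> 'b::metric_space"
  assumes sets_M: "sets M = sets (restrict_space borel S)"
    and meas: "\<And>y. y \<in> S \<Longrightarrow> G y \<in> borel_measurable M"
    and cont: "\<And>x. x \<in> S \<Longrightarrow> continuous_on S (\<lambda>y. G y x)"
  shows "(\<lambda>x. G x x) \<in> borel_measurable M"
proof (cases "S = {}")
  case True
  hence "space M = {}" using sets_eq_imp_space_eq[OF sets_M] by (simp add: space_restrict_space)
  thus ?thesis by (simp add: measurable_def)
next
  case False
  obtain T where T: "countable T" "T \<subseteq> S" "S \<subseteq> closure T" using separable by blast
  with False have "T \<noteq> {}" by auto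
  define e where "e = from_nat_into T"
  have e_range: "range e = T" unfolding e_def using range_from_nat_into[OF \<open>T \<noteq> {}\<close> T(1)] .
  hence e_in: "e i \<in> S" for i using T(2) by blast
  have approx: "\<exists>i. dist (e i) x < 1 / Suc n" if "x \<in> S" for x n
  proof -
    have "x \<in> closure T" "(0::real) < 1 / Suc n" using T(3) that by auto
    then obtain y where "y \<in> T" "dist y x < 1 / Suc n" unfolding closure_approachable by blast
    thus ?thesis using e_range by blast
  qed
  define L where "L n x = (LEAST i. dist (e i) x < 1 / Suc n)" for n x
  have [measurable]: "(\<lambda>x. dist (e i) x) \<in> borel_measurable M" for i
  proof -
    have "continuous_on S (\<lambda>x. dist (e i) x)" by (intro continuous_intros)
    thus ?thesis
      by (simp add: measurable_cong_sets[OF sets_M refl] borel_measurable_continuous_on_restrict)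
  qed
  have "L n \<in> measurable M (count_space UNIV)" for n
    unfolding L_def by measurable
  hence meas_approx: "(\<lambda>x. G (e (L n x)) x) \<in> borel_measurable M" for n
    by (rule measurable_compose_countable[OF meas[OF e_in]])
  have "(\<lambda>n. G (e (L n x)) x) \<longlonglongrightarrow> G x x" if x: "x \<in> S" for x
  proof -
    have closer: "dist (e (L n x)) x < 1 / Suc n" for n
      unfolding L_def by (rule LeastI_ex) (rule approx[OF x])
    have "(\<lambda>n. e (L n x)) \<longlonglongrightarrow> x"
    proof (rule tendsto_sandwich[THEN tendsto_dist_iff[THEN iffD2]])
      show "\<forall>\<^sub>F n in sequentially. 0 \<le> dist (e (L n x)) x" by simp
      show "\<forall>\<^sub>F n in sequentially. dist (e (L n x)) x \<le> 1 / Suc n"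
        using closer by (simp add: less_imp_le)
      show "(\<lambda>n. 0::real) \<longlonglongrightarrow> 0" by simp
      show "(\<lambda>n. 1 / real (Suc n)) \<longlonglongrightarrow> 0" by (rule LIMSEQ_Suc[OF lim_const_over_n])
    qed
    thus ?thesis by (rule continuous_on_tendsto_compose[OF cont[OF x] _ x]) (simp add: e_in)
  qed
  moreover have "space M = S" using sets_eq_imp_space_eq[OF sets_M] by (simp add: space_restrict_space)
  ultimately show ?thesis by (intro borel_measurable_LIMSEQ_metric[OF meas_approx]) auto
qed

section \<open>Bergman spaces with an invariant kernel measure\<close>

text \<open>Exactly the parts of (A.1)--(A.7) that the argument uses.\<close>
locale invariant_bergman_space =
  fixes \<Omega> :: "(complex ^ 'n) set" and \<sigma> :: "(complex ^ 'n) measure"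
    and \<phi> :: "complex ^ 'n \<Rightarrow> complex ^ 'n \<Rightarrow> complex ^ 'n"
    and K :: "complex ^ 'n \<Rightarrow> complex ^ 'n \<Rightarrow> complex"
  assumes open_domain: "open \<Omega>" and connected_domain: "connected \<Omega>" and zero_in_domain: "0 \<in> \<Omega>"
    and phi_in_domain: "z \<in> \<Omega> \<Longrightarrow> x \<in> \<Omega> \<Longrightarrow> \<phi> z x \<in> \<Omega>"
    and holo_phi: "z \<in> \<Omega> \<Longrightarrow> holo_map (\<phi> z) \<Omega>"
    and phi_involutive: "z \<in> \<Omega> \<Longrightarrow> x \<in> \<Omega> \<Longrightarrow> \<phi> z (\<phi> z x) = x"
    and phi_zero: "z \<in> \<Omega> \<Longrightarrow> \<phi> z 0 = z"
    and sets_sigma: "sets \<sigma> = sets (restrict_space borel \<Omega>)"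
    and finite_sigma: "finite_measure \<sigma>"
    and kernel_in_bergman_space: "z \<in> \<Omega> \<Longrightarrow> K z \<in> bergman_space \<Omega> \<sigma>"
    and reproducing: "f \<in> bergman_space \<Omega> \<sigma> \<Longrightarrow> z \<in> \<Omega> \<Longrightarrow> f z = L2_inner \<sigma> f (K z)"
    and blambda_phi_image:
      "z \<in> \<Omega> \<Longrightarrow> E \<in> sets \<sigma> \<Longrightarrow> emeasure (blambda \<sigma> K) (\<phi> z ` E) = emeasure (blambda \<sigma> K) E"
    and inner_kn: "z \<in> \<Omega> \<Longrightarrow> w \<in> \<Omega> \<Longrightarrow> cmod (L2_inner \<sigma> (kn \<sigma> K z) (kn \<sigma> K w)) = 1 / Knorm \<sigma> K (\<phi> z w)"

lemma strong_bergman_type_imp_invariant_bergman_space: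
  assumes "strong_bergman_type \<Omega> \<sigma> d \<phi> K"
  shows "invariant_bergman_space \<Omega> \<sigma> \<phi> K"
  using assms unfolding strong_bergman_type_def invariant_bergman_space_def
  by (simp add: image_subset_iff)

context invariant_bergman_space
begin

abbreviation "B \<equiv> bergman_space \<Omega> \<sigma>"
abbreviation "Kn \<equiv> Knorm \<sigma> K"
abbreviation "k \<equiv> kn \<sigma> K"
abbreviation "U \<equiv> Uop \<sigma> K \<phi>"

lemma space_sigma: "space \<sigma> = \<Omega>"
  using sets_eq_imp_space_eq[OF sets_sigma] by (simp add: space_restrict_space)

lemma continuous_on_imp_measurable: "continuous_on \<Omega> f \<Longrightarrow> f \<in> borel_measurable \<sigma>"
  by (simp add: measurable_cong_sets[OF sets_sigma refl] borel_measurable_continuous_on_restrict)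

lemma holo_fun_measurable: "holo_fun f \<Omega> \<Longrightarrow> f \<in> borel_measurable \<sigma>"
  by (intro continuous_on_imp_measurable holo_fun_continuous_on)

lemma phi_measurable: "z \<in> \<Omega> \<Longrightarrow> \<phi> z \<in> measurable \<sigma> \<sigma>"
  using measurable_restrict_space2[of "\<phi> z" \<sigma> \<Omega> borel] phi_in_domain
    continuous_on_imp_measurable[OF holo_map_continuous_on[OF holo_phi]]
  by (simp add: measurable_cong_sets[OF refl sets_sigma] space_sigma)

lemma bergman_space_L2: "f \<in> B \<Longrightarrow> L2 \<sigma> f"
  and bergman_space_holo: "f \<in> B \<Longrightarrow> holo_fun f \<Omega>"
  by (simp_all add: bergman_space_def)

lemma bergman_space_measurable: "f \<in> B \<Longrightarrow> f \<in> borel_measurable \<sigma>"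
  by (simp add: bergman_space_def L2_def)

lemma bergman_spaceI:
  assumes "holo_fun f \<Omega>" "integrable \<sigma> (\<lambda>x. (cmod (f x))\<^sup>2)"
  shows "f \<in> B"
  using assms holo_fun_measurable by (simp add: bergman_space_def L2_def)

lemma const_in_bergman_space: "(\<lambda>_. c) \<in> B"
  by (intro bergman_spaceI holo_fun_const finite_measure.integrable_const[OF finite_sigma])

lemma kernel_eq_inner: "z \<in> \<Omega> \<Longrightarrow> w \<in> \<Omega> \<Longrightarrow> K z w = L2_inner \<sigma> (K z) (K w)"
  by (simp add: reproducing kernel_in_bergman_space)

lemma kernel_conj_sym: "z \<in> \<Omega> \<Longrightarrow> w \<in> \<Omega> \<Longrightarrow> K z w = cnj (K w z)"
  by (metis kernel_eq_inner L2_inner_commute)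

lemma Knorm_sq: "(Kn z)\<^sup>2 = (\<integral>x. (cmod (K z x))\<^sup>2 \<partial>\<sigma>)"
  by (simp add: Knorm_def L2_norm_def integral_nonneg_AE)

lemma kernel_diag: "z \<in> \<Omega> \<Longrightarrow> K z z = of_real ((Kn z)\<^sup>2)"
  by (simp add: kernel_eq_inner L2_inner_self Knorm_sq)

lemma Knorm_pos:
  assumes z: "z \<in> \<Omega>"
  shows "Kn z > 0"
proof (rule ccontr)
  assume "\<not> Kn z > 0"
  moreover have "0 \<le> (\<integral>x. (cmod (K z x))\<^sup>2 \<partial>\<sigma>)" by simp
  ultimately have "(\<integral>x. (cmod (K z x))\<^sup>2 \<partial>\<sigma>) = 0"
    by (simp add: Knorm_def L2_norm_def)
  hence "AE x in \<sigma>. (cmod (K z x))\<^sup>2 = 0"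
    using kernel_in_bergman_space[OF z] bergman_space_L2
    by (subst integral_nonneg_eq_0_iff_AE[symmetric]) (simp_all add: L2_def)
  hence "L2_inner \<sigma> (\<lambda>_. 1) (K z) = 0"
    unfolding L2_inner_def by (intro integral_eq_zero_AE) (auto elim: AE_mp)
  moreover have "L2_inner \<sigma> (\<lambda>_. 1) (K z) = 1"
    using reproducing[OF const_in_bergman_space z] by simp
  ultimately show False by simp
qed

lemma kn_holo:
  assumes "z \<in> \<Omega>"
  shows "holo_fun (k z) \<Omega>"
proof -
  have "k z = (\<lambda>x. inverse (of_real (Kn z)) * K z x)"
    by (simp add: kn_def fun_eq_iff divide_inverse mult.commute)
  thus ?thesis
    by (simp add: holo_fun_mult holo_fun_const bergman_space_holo kernel_in_bergman_space assms)
qed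

lemma kn_measurable[measurable]: "z \<in> \<Omega> \<Longrightarrow> k z \<in> borel_measurable \<sigma>"
  by (intro holo_fun_measurable kn_holo)

lemma kn_norm:
  assumes "z \<in> \<Omega>" "x \<in> \<Omega>"
  shows "cmod (k z x) = Kn x / Kn (\<phi> z x)"
proof -
  have pos: "Kn z > 0" "Kn x > 0" "Kn (\<phi> z x) > 0"
    using Knorm_pos assms phi_in_domain by auto
  have "L2_inner \<sigma> (k z) (k x) = K z x / of_real (Kn z * Kn x)"
    unfolding L2_inner_def kn_def using kernel_eq_inner[OF assms] by (simp add: field_simps L2_inner_def)
  hence "1 / Kn (\<phi> z x) = cmod (k z x) / Kn x"
    using inner_kn[OF assms] pos by (simp add: kn_def norm_divide norm_mult)
  thus ?thesis using pos by (simp add: field_simps)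
qed

lemma kn_nonzero: "z \<in> \<Omega> \<Longrightarrow> x \<in> \<Omega> \<Longrightarrow> k z x \<noteq> 0"
  using kn_norm[of z x] Knorm_pos phi_in_domain by force

lemma phi_self: "z \<in> \<Omega> \<Longrightarrow> \<phi> z z = 0"
  using phi_involutive[of z 0] phi_zero zero_in_domain by simp

lemma Knorm_measurable[measurable]: "Kn \<in> borel_measurable \<sigma>"
proof -
  have "(\<lambda>x. K x x) \<in> borel_measurable \<sigma>"
  proof (rule borel_measurable_diagonal[OF sets_sigma, of K])
    show "K y \<in> borel_measurable \<sigma>" if "y \<in> \<Omega>" for y
      using bergman_space_measurable[OF kernel_in_bergman_space[OF that]] .
    show "continuous_on \<Omega> (\<lambda>y. K y x)" if x: "x \<in> \<Omega>" for x
    proof -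
      have "continuous_on \<Omega> (\<lambda>y. cnj (K x y))"
        by (intro continuous_on_cnj holo_fun_continuous_on bergman_space_holo kernel_in_bergman_space x)
      thus ?thesis by (rule continuous_on_eq) (simp add: kernel_conj_sym[of _ x] x)
    qed
  qed
  hence "(\<lambda>x. sqrt (Re (K x x))) \<in> borel_measurable \<sigma>" by measurable
  moreover have "Kn x = sqrt (Re (K x x))" if "x \<in> space \<sigma>" for x
    using that by (simp add: space_sigma kernel_diag Knorm_pos less_imp_le)
  ultimately show ?thesis by (simp cong: measurable_cong)
qed

abbreviation "\<Lambda> \<equiv> blambda \<sigma> K"

lemma sets_blambda: "sets \<Lambda> = sets \<sigma>"
  by (simp add: blambda_def)

lemma phi_measurable_blambda: "z \<in> \<Omega> \<Longrightarrow> \<phi> z \<in> measurable \<Lambda> \<Lambda>"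
  using phi_measurable by (simp add: measurable_cong_sets[OF sets_blambda sets_blambda])

lemma distr_blambda_phi:
  assumes z: "z \<in> \<Omega>"
  shows "distr \<Lambda> \<Lambda> (\<phi> z) = \<Lambda>"
proof (rule measure_eqI)
  fix A assume "A \<in> sets (distr \<Lambda> \<Lambda> (\<phi> z))"
  hence A: "A \<in> sets \<sigma>" by (simp add: sets_blambda)
  hence "A \<subseteq> \<Omega>" using sets.sets_into_space space_sigma by blast
  hence "\<phi> z -` A \<inter> space \<Lambda> = \<phi> z ` A"
    using phi_involutive[OF z] phi_in_domain[OF z] sets_eq_imp_space_eq[OF sets_blambda]
    by (auto simp: space_sigma image_iff) (metis subsetD)+
  thus "emeasure (distr \<Lambda> \<Lambda> (\<phi> z)) A = emeasure \<Lambda> A"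
    using emeasure_distr[OF phi_measurable_blambda[OF z]] A blambda_phi_image[OF z A]
    by (simp add: sets_blambda)
qed simp

lemma kn_norm_sq: "z \<in> \<Omega> \<Longrightarrow> x \<in> \<Omega> \<Longrightarrow> (cmod (k z x))\<^sup>2 = (Kn x)\<^sup>2 / (Kn (\<phi> z x))\<^sup>2"
  by (simp add: kn_norm power_divide)

text \<open>Change of variables along \<open>\<phi> z\<close>: write \<open>\<sigma> = Kn\<^sup>-\<^sup>2 \<Lambda>\<close> and use the \<open>\<phi> z\<close>-invariance of
  \<open>\<Lambda>\<close>; the Jacobian factor is \<open>(Kn v / Kn (\<phi> z v))\<^sup>2 = \<bar>k z v\<bar>\<^sup>2\<close>.\<close>
lemma phi_change_of_variables:
  fixes F :: "complex ^ 'n \<Rightarrow> 'b::{banach, second_countable_topology}"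
  assumes z: "z \<in> \<Omega>" and F[measurable]: "F \<in> borel_measurable \<sigma>"
  shows "(\<integral>y. F y \<partial>\<sigma>) = (\<integral>v. (cmod (k z v))\<^sup>2 *\<^sub>R F (\<phi> z v) \<partial>\<sigma>)"
    and "integrable \<sigma> F \<longleftrightarrow> integrable \<sigma> (\<lambda>v. (cmod (k z v))\<^sup>2 *\<^sub>R F (\<phi> z v))"
proof -
  define G where "G y = (1 / (Kn y)\<^sup>2) *\<^sub>R F y" for y
  have G_meas_sigma: "G \<in> borel_measurable \<sigma>" unfolding G_def by measurable
  hence G_meas: "G \<in> borel_measurable \<Lambda>" by (simp add: measurable_cong_sets[OF sets_blambda refl])
  have density: "\<Lambda> = density \<sigma> (\<lambda>x. ennreal ((Kn x)\<^sup>2))" unfolding blambda_def ..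
  have F_eq: "(Kn y)\<^sup>2 *\<^sub>R G y = F y" if "y \<in> space \<sigma>" for y
    using that Knorm_pos[of y] by (simp add: G_def space_sigma)
  have F_phi_eq: "(Kn v)\<^sup>2 *\<^sub>R G (\<phi> z v) = (cmod (k z v))\<^sup>2 *\<^sub>R F (\<phi> z v)" if "v \<in> space \<sigma>" for v
    using that z by (simp add: G_def space_sigma kn_norm_sq)
  have G_phi_meas: "(\<lambda>v. G (\<phi> z v)) \<in> borel_measurable \<sigma>"
    using measurable_compose[OF phi_measurable[OF z] G_meas_sigma] by simp
  have "(\<integral>y. F y \<partial>\<sigma>) = (\<integral>y. (Kn y)\<^sup>2 *\<^sub>R G y \<partial>\<sigma>)"
    by (rule Bochner_Integration.integral_cong) (simp_all add: F_eq)
  also have "\<dots> = (\<integral>y. G y \<partial>\<Lambda>)"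
    unfolding density using G_meas_sigma by (simp add: integral_density)
  also have "\<dots> = (\<integral>v. G (\<phi> z v) \<partial>\<Lambda>)"
    using integral_distr[OF phi_measurable_blambda[OF z] G_meas] by (simp add: distr_blambda_phi[OF z])
  also have "\<dots> = (\<integral>v. (Kn v)\<^sup>2 *\<^sub>R G (\<phi> z v) \<partial>\<sigma>)"
    unfolding density using G_phi_meas by (simp add: integral_density)
  also have "\<dots> = (\<integral>v. (cmod (k z v))\<^sup>2 *\<^sub>R F (\<phi> z v) \<partial>\<sigma>)"
    by (rule Bochner_Integration.integral_cong) (simp_all add: F_phi_eq)
  finally show "(\<integral>y. F y \<partial>\<sigma>) = (\<integral>v. (cmod (k z v))\<^sup>2 *\<^sub>R F (\<phi> z v) \<partial>\<sigma>)" .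
  have "integrable \<sigma> F \<longleftrightarrow> integrable \<sigma> (\<lambda>y. (Kn y)\<^sup>2 *\<^sub>R G y)"
    by (rule Bochner_Integration.integrable_cong) (simp_all add: F_eq)
  also have "\<dots> \<longleftrightarrow> integrable \<Lambda> G"
    unfolding density using G_meas_sigma by (simp add: integrable_density)
  also have "\<dots> \<longleftrightarrow> integrable \<Lambda> (\<lambda>v. G (\<phi> z v))"
    using integrable_distr_eq[OF phi_measurable_blambda[OF z] G_meas] by (simp add: distr_blambda_phi[OF z])
  also have "\<dots> \<longleftrightarrow> integrable \<sigma> (\<lambda>v. (Kn v)\<^sup>2 *\<^sub>R G (\<phi> z v))"
    unfolding density using G_phi_meas by (simp add: integrable_density)
  also have "\<dots> \<longleftrightarrow> integrable \<sigma> (\<lambda>v. (cmod (k z v))\<^sup>2 *\<^sub>R F (\<phi> z v))"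
    by (rule Bochner_Integration.integrable_cong) (simp_all add: F_phi_eq)
  finally show "integrable \<sigma> F \<longleftrightarrow> integrable \<sigma> (\<lambda>v. (cmod (k z v))\<^sup>2 *\<^sub>R F (\<phi> z v))" .
qed

lemma kn_L2_norm: "z \<in> \<Omega> \<Longrightarrow> (\<integral>x. (cmod (k z x))\<^sup>2 \<partial>\<sigma>) = 1"
  using Knorm_pos[of z] by (simp add: kn_def norm_divide power_divide flip: Knorm_sq)

lemma Knorm_zero: "Kn 0 = 1"
proof -
  have "L2_inner \<sigma> (k 0) (k 0) = 1"
    by (simp add: L2_inner_self kn_L2_norm zero_in_domain)
  hence "1 / Kn 0 = 1"
    using inner_kn[OF zero_in_domain zero_in_domain] phi_self[OF zero_in_domain] by simp
  thus ?thesis by simp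
qed

lemma integral_one_sigma: "(\<integral>x. 1 \<partial>\<sigma>) = (1::real)"
  using phi_change_of_variables(1)[OF zero_in_domain, of "\<lambda>_. 1::real"] kn_L2_norm[OF zero_in_domain]
  by simp

lemma kernel_zero_eq_one:
  assumes w: "w \<in> \<Omega>"
  shows "K 0 w = 1"
proof -
  have L2_one: "L2 \<sigma> (\<lambda>_. 1)" and L2_K0: "L2 \<sigma> (K 0)"
    using const_in_bergman_space kernel_in_bergman_space[OF zero_in_domain] bergman_space_L2 by auto
  have "(\<integral>x. (cmod (1 - K 0 x))\<^sup>2 \<partial>\<sigma>) = 1 - 2 * Re (L2_inner \<sigma> (\<lambda>_. 1) (K 0)) + (Kn 0)\<^sup>2"
    using L2_norm_diff_sq[OF L2_one L2_K0] integral_one_sigma by (simp add: Knorm_sq)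
  also have "\<dots> = 0"
    using reproducing[OF const_in_bergman_space zero_in_domain, of 1] by (simp add: Knorm_zero)
  finally have "AE x in \<sigma>. (cmod (1 - K 0 x))\<^sup>2 = 0"
    using L2_diff[OF L2_one L2_K0] by (subst integral_nonneg_eq_0_iff_AE[symmetric]) (simp_all add: L2_def)
  hence K0_ae: "AE x in \<sigma>. K 0 x = 1" by simp
  have "L2_inner \<sigma> (K 0) (K w) = L2_inner \<sigma> (\<lambda>_. 1) (K w)"
  proof -
    have [measurable]: "K 0 \<in> borel_measurable \<sigma>" "K w \<in> borel_measurable \<sigma>"
      using bergman_space_measurable kernel_in_bergman_space w zero_in_domain by auto
    show ?thesis using K0_ae
      unfolding L2_inner_def by (intro integral_cong_AE) (auto elim: AE_mp)
  qed
  thus ?thesis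
    using kernel_eq_inner[OF zero_in_domain w] reproducing[OF const_in_bergman_space w] by simp
qed

lemma kn_zero_eq_one: "w \<in> \<Omega> \<Longrightarrow> k 0 w = 1"
  by (simp add: kn_def Knorm_zero kernel_zero_eq_one)

lemma kn_phi_mult_eq_one:
  assumes z: "z \<in> \<Omega>" and v: "v \<in> \<Omega>"
  shows "k z (\<phi> z v) * k z v = 1"
proof -
  define h where "h v = k z (\<phi> z v) * k z v" for v
  have "holo_fun h \<Omega>"
    unfolding h_def using phi_in_domain[OF z]
    by (intro holo_fun_mult holo_fun_compose[OF kn_holo[OF z] holo_phi[OF z]] kn_holo z) auto
  moreover have "cmod (h x) = 1" if "x \<in> \<Omega>" for x
    using kn_norm[OF z phi_in_domain[OF z that]] kn_norm[OF z that] Knorm_pos[OF that]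
      Knorm_pos[OF phi_in_domain[OF z that]]
    by (simp add: h_def norm_mult phi_involutive z that)
  ultimately have "h constant_on \<Omega>"
    by (rule holo_fun_unimodular_imp_constant[OF open_domain connected_domain])
  hence "h v = h z" using v z by (auto simp: constant_on_def)
  also have "h z = 1"
    using kernel_conj_sym[OF z zero_in_domain] kernel_zero_eq_one[OF z] kernel_diag[OF z] Knorm_pos[OF z]
    by (simp add: h_def kn_def phi_self z power2_eq_square)
  finally show ?thesis by (simp add: h_def)
qed

lemma Uop_involutive: "z \<in> \<Omega> \<Longrightarrow> v \<in> \<Omega> \<Longrightarrow> U z (U z f) v = f v"
  by (simp add: Uop_def phi_involutive phi_in_domain kn_phi_mult_eq_one mult.assoc)

lemma Uop_in_bergman_space:
  assumes z: "z \<in> \<Omega>" and f: "f \<in> B"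
  shows "U z f \<in> B"
proof (rule bergman_spaceI)
  show "holo_fun (U z f) \<Omega>"
    unfolding Uop_def using phi_in_domain[OF z]
    by (intro holo_fun_mult holo_fun_compose[OF bergman_space_holo[OF f] holo_phi[OF z]] kn_holo z) auto
  have [measurable]: "f \<in> borel_measurable \<sigma>" using bergman_space_measurable[OF f] .
  have "integrable \<sigma> (\<lambda>y. (cmod (f y))\<^sup>2)" using bergman_space_L2[OF f] by (simp add: L2_def)
  thus "integrable \<sigma> (\<lambda>v. (cmod (U z f v))\<^sup>2)"
    using phi_change_of_variables(2)[OF z, of "\<lambda>y. (cmod (f y))\<^sup>2"]
    by (simp add: Uop_def norm_mult power_mult_distrib mult.commute)
qed

lemma L2_inner_Uop:
  assumes z: "z \<in> \<Omega>" and [measurable]: "f \<in> borel_measurable \<sigma>" "g \<in> borel_measurable \<sigma>"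
  shows "L2_inner \<sigma> (U z f) (U z g) = L2_inner \<sigma> f g"
proof -
  have "L2_inner \<sigma> f g = (\<integral>v. (cmod (k z v))\<^sup>2 *\<^sub>R (f (\<phi> z v) * cnj (g (\<phi> z v))) \<partial>\<sigma>)"
    unfolding L2_inner_def by (rule phi_change_of_variables(1)[OF z]) measurable
  also have "\<dots> = L2_inner \<sigma> (U z f) (U z g)"
    unfolding L2_inner_def Uop_def scaleR_conv_of_real complex_norm_square by (simp add: ac_simps)
  finally show ?thesis ..
qed

lemma bergman_space_eqI:
  assumes "g \<in> B" "h \<in> B" "\<And>f. f \<in> B \<Longrightarrow> L2_inner \<sigma> f g = L2_inner \<sigma> f h" "v \<in> \<Omega>"
  shows "g v = h v"
  using assms reproducing kernel_in_bergman_space by (metis L2_inner_commute)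

lemma kernel_transformation:
  assumes z: "z \<in> \<Omega>" and w: "w \<in> \<Omega>" and v: "v \<in> \<Omega>"
  shows "K (\<phi> z w) (\<phi> z v) * k z v * cnj (k z w) = K w v"
proof -
  define c where "c = cnj (inverse (k z w))"
  have Kphi: "K (\<phi> z w) \<in> B" using kernel_in_bergman_space phi_in_domain z w by blast
  have "U z (K (\<phi> z w)) v = c * K w v"
  proof (rule bergman_space_eqI)
    show "U z (K (\<phi> z w)) \<in> B" using Uop_in_bergman_space[OF z Kphi] .
    show "(\<lambda>v. c * K w v) \<in> B" by (intro bergman_space_cmult kernel_in_bergman_space w)
    fix f assume f: "f \<in> B"
    have "L2_inner \<sigma> f (U z (K (\<phi> z w))) = L2_inner \<sigma> (U z (U z f)) (U z (K (\<phi> z w)))"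
      by (rule L2_inner_cong) (simp_all add: space_sigma Uop_involutive z)
    also have "\<dots> = L2_inner \<sigma> (U z f) (K (\<phi> z w))"
      using z f Kphi by (intro L2_inner_Uop bergman_space_measurable Uop_in_bergman_space)
    also have "\<dots> = f w * k z (\<phi> z w)"
      using reproducing[OF Uop_in_bergman_space[OF z f] phi_in_domain[OF z w]]
      by (simp add: Uop_def phi_involutive z w)
    also have "\<dots> = L2_inner \<sigma> f (\<lambda>v. c * K w v)"
      using kn_phi_mult_eq_one[OF z w] kn_nonzero[OF z w]
      by (simp add: L2_inner_scale_right c_def flip: reproducing[OF f w]) (simp add: field_simps)
    finally show "L2_inner \<sigma> f (U z (K (\<phi> z w))) = L2_inner \<sigma> f (\<lambda>v. c * K w v)" .
  qed (rule v)
  thus ?thesis using kn_nonzero[OF z w] by (simp add: Uop_def c_def field_simps)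
qed

lemma Pop_eq_L2_inner: "x \<in> \<Omega> \<Longrightarrow> Pop \<sigma> K f x = L2_inner \<sigma> f (K x)"
  unfolding Pop_def L2_inner_def[of \<sigma> f]
  by (intro Bochner_Integration.integral_cong)
     (simp_all add: space_sigma mult.commute kernel_conj_sym[of _ x] flip: kernel_eq_inner)

lemma Pop_Uop:
  assumes z: "z \<in> \<Omega>" and w: "w \<in> \<Omega>" and f[measurable]: "f \<in> borel_measurable \<sigma>"
  shows "Pop \<sigma> K (U z f) w = Pop \<sigma> K f (\<phi> z w) * k z w"
proof -
  have Kphi: "K (\<phi> z w) \<in> B" using kernel_in_bergman_space phi_in_domain z w by blast
  have "Pop \<sigma> K (U z f) w = L2_inner \<sigma> (U z f) (\<lambda>v. cnj (k z w) * U z (K (\<phi> z w)) v)"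
    unfolding Pop_eq_L2_inner[OF w]
    by (rule L2_inner_cong) (simp_all add: space_sigma Uop_def kernel_transformation[OF z w, symmetric] ac_simps)
  also have "\<dots> = k z w * L2_inner \<sigma> f (K (\<phi> z w))"
    using L2_inner_Uop[OF z f bergman_space_measurable[OF Kphi]] by (simp add: L2_inner_scale_right)
  also have "\<dots> = Pop \<sigma> K f (\<phi> z w) * k z w"
    by (simp add: Pop_eq_L2_inner phi_in_domain z w)
  finally show ?thesis .
qed

lemma Uop_Top_kn:
  assumes u[measurable]: "u \<in> borel_measurable \<sigma>" and z: "z \<in> \<Omega>" and w: "w \<in> \<Omega>"
  shows "U z (Top \<sigma> K u (k z)) w = Pop \<sigma> K (u \<circ> \<phi> z) w"
proof -
  have [measurable]: "k z \<in> borel_measurable \<sigma>" using kn_measurable[OF z] .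
  have "U z (Top \<sigma> K u (k z)) w = Pop \<sigma> K (\<lambda>y. u y * k z y) (\<phi> z w) * k z w"
    by (simp add: Uop_def Top_def)
  also have "\<dots> = Pop \<sigma> K (U z (\<lambda>y. u y * k z y)) w"
    by (rule Pop_Uop[symmetric, OF z w]) measurable
  also have "\<dots> = Pop \<sigma> K (u \<circ> \<phi> z) w"
    unfolding Pop_def
    by (intro Bochner_Integration.integral_cong)
       (simp_all add: space_sigma Uop_def kn_phi_mult_eq_one z mult.assoc)
  finally show ?thesis .
qed

end

theorem mainTheorem8:
  fixes \<Omega> :: "(complex ^ 'n) set" and \<sigma> :: "(complex ^ 'n) measure"
    and d :: "complex ^ 'n \<Rightarrow> complex ^ 'n \<Rightarrow> real"
    and \<phi> :: "complex ^ 'n \<Rightarrow> complex ^ 'n \<Rightarrow> complex ^ 'n"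
    and K :: "complex ^ 'n \<Rightarrow> complex ^ 'n \<Rightarrow> complex"
  assumes "strong_bergman_type \<Omega> \<sigma> d \<phi> K"
  shows "(\<forall>w\<in>\<Omega>. kn \<sigma> K 0 w = 1) \<and>
    (\<forall>u. u \<in> borel_measurable \<sigma> \<and> (\<forall>z\<in>\<Omega>. L2 \<sigma> (u \<circ> \<phi> z)) \<longrightarrow>
      (\<forall>z\<in>\<Omega>. \<forall>w\<in>\<Omega>. cmod (Uop \<sigma> K \<phi> z (Top \<sigma> K u (kn \<sigma> K z)) w) = cmod (Pop \<sigma> K (u \<circ> \<phi> z) w)))"
proof -
  interpret invariant_bergman_space \<Omega> \<sigma> \<phi> K
    using assms by (rule strong_bergman_type_imp_invariant_bergman_space)
  show ?thesis by (simp add: kn_zero_eq_one Uop_Top_kn)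
qed

end
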